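(* Let $(A,B)$ be a Katsura pair. Then the KEP-action $(G_B,E_A)$ is contracting if and only if $(G_{B,\infty},E_{A_\infty})$ is contracting.
   Context: Katsura pair: $N\in\mathbb{N}$, $A\in M_N(\mathbb{N})$ (nonnegative integers), $B\in M_N(\mathbb{Z})$ with $A_{ij}=0\Rightarrow B_{ij}=0$. Graph $E_A$: vertices $\{1,\dots,N\}$, edges $e_{i,j,m}$ ($0\le m<A_{ij}$), $r=i$, $s=j$; $B_e=B_{r(e)s(e)}$. The group bundle $\mathbb{Z}\times E_A^0$ (elements $a_i^k$) acts by $a_i^k\cdot e_{i,j,m}=e_{i,j,\hat m}$, $a_i^k|_{e_{i,j,m}}=a_j^{\hat k}$ with $kB_{ij}+m=\hat kA_{ij}+\hat m$, $0\le\hat m<A_{ij}$, extended recursively to finite paths via $g\cdot(e\nu)=(g\cdot e)(g|_e\cdot\nu)$, $g|_{e\nu}=(g|_e)|_\nu$. $G_B$ is the faithful quotient; $(G_B,E_A)$ is the KEP-action; $(G_B)_i$ its isotropy group at $i$. Infinite part: $E^0_{A,\infty}=\{i:(G_B)_i\text{ infinite}\}$ (then $(G_B)_i=\mathbb{Z}$); $E_{A,\infty}=E_{A_\infty}$ is the subgraph of $E_A$ with vertices $E^0_{A,\infty}$ and edges $\{e:s(e)\in E^0_{A,\infty},B_e\ne0\}$ (its adjacency matrix is $A_\infty$). $G_{B,\infty}=\{g\in G_B: d(g)\in E^0_{A,\infty}\}=\mathbb{Z}\times E^0_{A,\infty}$, and the KEP formulas restrict to an action-restriction pair (possibly non-faithful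 action with restrictions) $(G_{B,\infty},E_{A_\infty})$. Contracting (for a groupoid $G$ with an action-restriction pair on a finite graph $E$): there is a finite $F\subseteq G$ such that for every $g\in G$ there is $n\ge0$ with $g|_\mu\in F$ for all paths $\mu\in d(g)E^k$, $k\ge n$. *)

theory Defs
  imports Main
begin

text \<open>Vertices are 1..N; an edge e_{i,j,m} is the triple (i,j,m) with
  r(e) = i, s(e) = j, 0 <= m < A i j. Finite paths are lists of edges e_1 ... e_k with
  s(e_t) = r(e_{t+1}); the path of length 0 at a vertex v is the empty list.
  The group bundle Z x E^0 has elements (k,i) standing for a_i^k.\<close>

type_synonym edge = "nat \<times> nat \<times> nat"

definition katsura_pair :: "nat \<Rightarrow> (nat \<Rightarrow> nat \<Rightarrow> nat) \<Rightarrow> (nat \<Rightarrow> nat \<Rightarrow> int) \<Rightarrow> bool" where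
  "katsura_pair N A B \<longleftrightarrow> (\<forall>i\<in>{1..N}. \<forall>j\<in>{1..N}. A i j = 0 \<longrightarrow> B i j = 0)"

definition src :: "edge \<Rightarrow> nat" where "src e = fst (snd e)"
definition rng :: "edge \<Rightarrow> nat" where "rng e = fst e"

definition kep_edges :: "nat \<Rightarrow> (nat \<Rightarrow> nat \<Rightarrow> nat) \<Rightarrow> edge set" where
  "kep_edges N A = {(i,j,m). i \<in> {1..N} \<and> j \<in> {1..N} \<and> m < A i j}"

definition paths :: "nat set \<Rightarrow> edge set \<Rightarrow> nat \<Rightarrow> nat \<Rightarrow> edge list set" where
  "paths V Ed v k = {\<mu>. v \<in> V \<and> length \<mu> = k \<and> set \<mu> \<subseteq> Ed \<and>
      (\<mu> \<noteq> [] \<longrightarrow> rng (hd \<mu>) = v) \<and>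
      (\<forall>t. Suc t < k \<longrightarrow> src (\<mu> ! t) = rng (\<mu> ! Suc t))}"

text \<open>a_i^k . e_{i,j,m} = e_{i,j,mhat}, a_i^k|_e = a_j^{khat}, k B_ij + m = khat A_ij + mhat.\<close>
definition kep_edge_act :: "(nat \<Rightarrow> nat \<Rightarrow> nat) \<Rightarrow> (nat \<Rightarrow> nat \<Rightarrow> int) \<Rightarrow> int \<Rightarrow> edge \<Rightarrow> edge" where
  "kep_edge_act A B k e = (case e of (i,j,m) \<Rightarrow>
      (i, j, nat ((k * B i j + int m) mod int (A i j))))"

definition kep_edge_res :: "(nat \<Rightarrow> nat \<Rightarrow> nat) \<Rightarrow> (nat \<Rightarrow> nat \<Rightarrow> int) \<Rightarrow> int \<Rightarrow> edge \<Rightarrow> int" where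
  "kep_edge_res A B k e = (case e of (i,j,m) \<Rightarrow> (k * B i j + int m) div int (A i j))"

fun kep_act :: "(nat \<Rightarrow> nat \<Rightarrow> nat) \<Rightarrow> (nat \<Rightarrow> nat \<Rightarrow> int) \<Rightarrow> int \<Rightarrow> edge list \<Rightarrow> edge list" where
  "kep_act A B k [] = []"
| "kep_act A B k (e # \<nu>) = kep_edge_act A B k e # kep_act A B (kep_edge_res A B k e) \<nu>"

fun kep_res_int :: "(nat \<Rightarrow> nat \<Rightarrow> nat) \<Rightarrow> (nat \<Rightarrow> nat \<Rightarrow> int) \<Rightarrow> int \<Rightarrow> edge list \<Rightarrow> int" where
  "kep_res_int A B k [] = k"
| "kep_res_int A B k (e # \<nu>) = kep_res_int A B (kep_edge_res A B k e) \<nu>"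

definition kep_restr :: "(nat \<Rightarrow> nat \<Rightarrow> nat) \<Rightarrow> (nat \<Rightarrow> nat \<Rightarrow> int) \<Rightarrow> int \<times> nat \<Rightarrow> edge list \<Rightarrow> int \<times> nat" where
  "kep_restr A B g \<mu> = (kep_res_int A B (fst g) \<mu>, if \<mu> = [] then snd g else src (last \<mu>))"

text \<open>The faithful quotient: identify a_i^k and a_i^l when they act identically on all finite
  paths of E_A with range i.\<close>
definition kep_rel :: "nat \<Rightarrow> (nat \<Rightarrow> nat \<Rightarrow> nat) \<Rightarrow> (nat \<Rightarrow> nat \<Rightarrow> int) \<Rightarrow> ((int \<times> nat) \<times> (int \<times> nat)) set" where
  "kep_rel N A B = {(g,h). g \<in> UNIV \<times> {1..N} \<and> h \<in> UNIV \<times> {1..N} \<and> snd g = snd h \<and>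
      (\<forall>n \<mu>. \<mu> \<in> paths {1..N} (kep_edges N A) (snd g) n \<longrightarrow> kep_act A B (fst g) \<mu> = kep_act A B (fst h) \<mu>)}"

definition G_B :: "nat \<Rightarrow> (nat \<Rightarrow> nat \<Rightarrow> nat) \<Rightarrow> (nat \<Rightarrow> nat \<Rightarrow> int) \<Rightarrow> (int \<times> nat) set set" where
  "G_B N A B = (UNIV \<times> {1..N}) // kep_rel N A B"

text \<open>Isotropy group of G_B at i (G_B is a group bundle, so all elements over i).\<close>
definition G_B_iso :: "nat \<Rightarrow> (nat \<Rightarrow> nat \<Rightarrow> nat) \<Rightarrow> (nat \<Rightarrow> nat \<Rightarrow> int) \<Rightarrow> nat \<Rightarrow> (int \<times> nat) set set" where
  "G_B_iso N A B i = (UNIV \<times> {i}) // kep_rel N A B"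

definition G_B_d :: "(int \<times> nat) set \<Rightarrow> nat" where
  "G_B_d c = snd (SOME g. g \<in> c)"

definition G_B_restr :: "nat \<Rightarrow> (nat \<Rightarrow> nat \<Rightarrow> nat) \<Rightarrow> (nat \<Rightarrow> nat \<Rightarrow> int) \<Rightarrow> (int \<times> nat) set \<Rightarrow> edge list \<Rightarrow> (int \<times> nat) set" where
  "G_B_restr N A B c \<mu> = kep_rel N A B `` {kep_restr A B (SOME g. g \<in> c) \<mu>}"

definition inf_vertices :: "nat \<Rightarrow> (nat \<Rightarrow> nat \<Rightarrow> nat) \<Rightarrow> (nat \<Rightarrow> nat \<Rightarrow> int) \<Rightarrow> nat set" where
  "inf_vertices N A B = {i \<in> {1..N}. infinite (G_B_iso N A B i)}"

definition inf_edges :: "nat \<Rightarrow> (nat \<Rightarrow> nat \<Rightarrow> nat) \<Rightarrow> (nat \<Rightarrow> nat \<Rightarrow> int) \<Rightarrow> edge set" where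
  "inf_edges N A B = {e \<in> kep_edges N A. src e \<in> inf_vertices N A B \<and> B (rng e) (src e) \<noteq> 0}"

definition contracting :: "'g set \<Rightarrow> ('g \<Rightarrow> nat) \<Rightarrow> (nat \<Rightarrow> nat \<Rightarrow> edge list set) \<Rightarrow> ('g \<Rightarrow> edge list \<Rightarrow> 'g) \<Rightarrow> bool" where
  "contracting G d P res \<longleftrightarrow>
     (\<exists>F. F \<subseteq> G \<and> finite F \<and>
        (\<forall>g\<in>G. \<exists>n. \<forall>k\<ge>n. \<forall>\<mu>\<in>P (d g) k. res g \<mu> \<in> F))"

definition KEP_contracting :: "nat \<Rightarrow> (nat \<Rightarrow> nat \<Rightarrow> nat) \<Rightarrow> (nat \<Rightarrow> nat \<Rightarrow> int) \<Rightarrow> bool" where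
  "KEP_contracting N A B =
     contracting (G_B N A B) G_B_d (paths {1..N} (kep_edges N A)) (G_B_restr N A B)"

definition KEP_inf_contracting :: "nat \<Rightarrow> (nat \<Rightarrow> nat \<Rightarrow> nat) \<Rightarrow> (nat \<Rightarrow> nat \<Rightarrow> int) \<Rightarrow> bool" where
  "KEP_inf_contracting N A B =
     contracting (UNIV \<times> inf_vertices N A B) snd
        (paths (inf_vertices N A B) (inf_edges N A B)) (kep_restr A B)"

end

theory Submission
  imports Defs
begin

text \<open>
  If the isotropy group at a vertex \<open>j\<close> is finite, some relation \<open>a\<^sub>j\<^sup>x = a\<^sub>j\<^sup>y\<close> with
  \<open>x \<noteq> y\<close> holds, and it passes to the restrictions along every edge.  At an infinite
  vertex distinct powers are never identified, so an edge with finite range \<open>j\<close> and infinite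
  source \<open>l\<close> must have \<open>B\<^sub>j\<^sub>l = 0\<close>.  Consequently the tame elements -- those in a finite
  isotropy group, together with the units \<open>a\<^sub>l\<^sup>0\<close> -- form a finite set closed under
  restriction, and every restriction of an element at an infinite vertex either stays
  in the infinite part along a path of \<open>E\<^sub>A\<^sub>,\<^sub>\<infinity>\<close> or becomes tame.  As the quotient map
  \<open>\<int> \<times> E\<^sup>0 \<rightarrow> G\<^sub>B\<close> is injective over infinite vertices, the finite sets witnessing
  contraction can be transported in both directions.
\<close>

lemma paths_Nil: "[] \<in> paths V Ed v k \<longleftrightarrow> v \<in> V \<and> k = 0"
  by (auto simp: paths_def)

lemma paths_Cons:
  assumes "\<forall>e\<in>Ed. src e \<in> V"
  shows "e # \<nu> \<in> paths V Ed v k \<longleftrightarrow>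
     (\<exists>k'. k = Suc k' \<and> v \<in> V \<and> e \<in> Ed \<and> rng e = v \<and> \<nu> \<in> paths V Ed (src e) k')"
proof
  assume h: "e # \<nu> \<in> paths V Ed v k"
  then obtain k' where k: "k = Suc k'" "length \<nu> = k'" by (auto simp: paths_def)
  from h k have link: "\<forall>t. Suc t < Suc k' \<longrightarrow> src ((e # \<nu>) ! t) = rng ((e # \<nu>) ! Suc t)"
    by (simp add: paths_def)
  have "\<nu> \<noteq> [] \<longrightarrow> rng (hd \<nu>) = src e"
    using link[rule_format, of 0] k by (cases \<nu>) auto
  moreover have "\<forall>t. Suc t < k' \<longrightarrow> src (\<nu> ! t) = rng (\<nu> ! Suc t)"
    using link[rule_format, of "Suc _"] by simp
  moreover have "e \<in> Ed" "v \<in> V" "rng e = v" "set \<nu> \<subseteq> Ed" using h by (auto simp: paths_def)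
  ultimately show "\<exists>k'. k = Suc k' \<and> v \<in> V \<and> e \<in> Ed \<and> rng e = v \<and> \<nu> \<in> paths V Ed (src e) k'"
    using assms k by (auto simp: paths_def)
next
  assume "\<exists>k'. k = Suc k' \<and> v \<in> V \<and> e \<in> Ed \<and> rng e = v \<and> \<nu> \<in> paths V Ed (src e) k'"
  then obtain k' where h: "k = Suc k'" "v \<in> V" "e \<in> Ed" "rng e = v" "\<nu> \<in> paths V Ed (src e) k'"
    by blast
  have "src ((e # \<nu>) ! t) = rng ((e # \<nu>) ! Suc t)" if t: "Suc t < Suc k'" for t
  proof (cases t)
    case 0
    then have "\<nu> \<noteq> []" using t h(5) by (auto simp: paths_def)
    then show ?thesis using 0 h(5) by (auto simp: paths_def hd_conv_nth)
  next
    case (Suc t')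
    then show ?thesis using t h(5) by (auto simp: paths_def)
  qed
  then show "e # \<nu> \<in> paths V Ed v k" using h by (auto simp: paths_def)
qed

lemma paths_mono: "V \<subseteq> V' \<Longrightarrow> Ed \<subseteq> Ed' \<Longrightarrow> \<mu> \<in> paths V Ed v k \<Longrightarrow> \<mu> \<in> paths V' Ed' v k"
  by (auto simp: paths_def)

lemma snd_kep_restr_in_vertices:
  assumes "\<forall>e\<in>Ed. src e \<in> V" "\<mu> \<in> paths V Ed (snd g) k"
  shows "snd (kep_restr A B g \<mu>) \<in> V"
proof (cases "\<mu> = []")
  case False
  then have "last \<mu> \<in> Ed" using assms(2) last_in_set[of \<mu>] by (auto simp: paths_def)
  then show ?thesis using False assms(1) by (simp add: kep_restr_def)
qed (use assms(2) in \<open>simp add: kep_restr_def paths_def\<close>)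

lemma kep_restr_Cons: "kep_restr A B g (e # \<nu>) = kep_restr A B (kep_edge_res A B (fst g) e, src e) \<nu>"
  by (simp add: kep_restr_def)

lemma src_kep_edges: "\<forall>e\<in>kep_edges N A. src e \<in> {1..N}"
  by (auto simp: kep_edges_def src_def)

lemma src_inf_edges: "\<forall>e\<in>inf_edges N A B. src e \<in> inf_vertices N A B"
  by (auto simp: inf_edges_def)

lemma inf_vertices_subset: "inf_vertices N A B \<subseteq> {1..N}"
  by (auto simp: inf_vertices_def)

lemma inf_edges_subset: "inf_edges N A B \<subseteq> kep_edges N A"
  by (auto simp: inf_edges_def)

lemma kep_edges_label_bound:
  "\<mu> \<in> paths V (kep_edges N A) v k \<Longrightarrow> \<forall>(i, j, m)\<in>set \<mu>. m < A i j"
  by (fastforce simp: paths_def kep_edges_def)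

lemma kep_edge_res_eq_0:
  assumes "e \<in> kep_edges N A" "k = 0 \<or> B (rng e) (src e) = 0"
  shows "kep_edge_res A B k e = 0"
  using assms by (auto simp: kep_edges_def kep_edge_res_def rng_def src_def)

lemma kep_act_add:
  "\<forall>(i, j, m)\<in>set \<mu>. m < A i j \<Longrightarrow> kep_act A B t (kep_act A B x \<mu>) = kep_act A B (x + t) \<mu>"
proof (induction \<mu> arbitrary: x t)
  case Nil
  then show ?case by simp
next
  case (Cons e \<nu>)
  obtain i j m where e: "e = (i, j, m)" by (cases e) auto
  define a where "a = int (A i j)"
  define w where "w = x * B i j + int m"
  have a_pos: "a > 0" using Cons.prems e a_def by auto
  have w_mod: "int (nat (w mod a)) = w mod a" using a_pos by simp
  have "(t * B i j + w mod a) mod a = ((x + t) * B i j + int m) mod a"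
    by (simp add: mod_add_right_eq w_def algebra_simps)
  then have act: "kep_edge_act A B t (kep_edge_act A B x e) = kep_edge_act A B (x + t) e"
    unfolding kep_edge_act_def e using w_mod by (simp add: a_def w_def)
  have split: "(x + t) * B i j + int m = (t * B i j + w mod a) + (w div a) * a"
    using div_mult_mod_eq[of w a] by (simp add: w_def algebra_simps)
  have "((t * B i j + w mod a) + (w div a) * a) div a = (t * B i j + w mod a) div a + w div a"
    using div_mult_self1[of a "t * B i j + w mod a" "w div a"] a_pos by linarith
  then have "((x + t) * B i j + int m) div a = (t * B i j + w mod a) div a + w div a"
    by (simp only: split)
  then have res: "kep_edge_res A B x e + kep_edge_res A B t (kep_edge_act A B x e)
      = kep_edge_res A B (x + t) e"
    unfolding kep_edge_act_def kep_edge_res_def e using w_mod by (simp add: a_def w_def)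
  show ?case using Cons act res by (simp add: add.commute)
qed

lemma kep_rel_equiv: "equiv (UNIV \<times> {1..N}) (kep_rel N A B)"
  unfolding equiv_def refl_on_def sym_def trans_def kep_rel_def by auto

lemma G_B_iso_eq: "G_B_iso N A B l = (\<lambda>z. kep_rel N A B `` {(z, l)}) ` UNIV"
  unfolding G_B_iso_def quotient_def by auto

lemma kep_rel_class_shift:
  assumes "((x, l), (y, l)) \<in> kep_rel N A B"
  shows "kep_rel N A B `` {(z + (y - x), l)} = kep_rel N A B `` {(z, l)}"
proof -
  have l: "l \<in> {1..N}"
    and same: "\<And>n \<mu>. \<mu> \<in> paths {1..N} (kep_edges N A) l n \<Longrightarrow> kep_act A B x \<mu> = kep_act A B y \<mu>"
    using assms by (auto simp: kep_rel_def)
  have "kep_act A B (z + (y - x)) \<mu> = kep_act A B z \<mu>"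
    if \<mu>: "\<mu> \<in> paths {1..N} (kep_edges N A) l n" for \<mu> n
  proof -
    note add = kep_act_add[OF kep_edges_label_bound[OF \<mu>]]
    have "kep_act A B (z + (y - x)) \<mu> = kep_act A B (z - x) (kep_act A B y \<mu>)"
      using add[where t = "z - x" and x = y] by (simp add: algebra_simps)
    also have "\<dots> = kep_act A B (z - x) (kep_act A B x \<mu>)"
      using same[OF \<mu>] by simp
    also have "\<dots> = kep_act A B z \<mu>"
      using add[where t = "z - x" and x = x] by simp
    finally show ?thesis .
  qed
  then have "((z + (y - x), l), (z, l)) \<in> kep_rel N A B"
    using l by (auto simp: kep_rel_def)
  then show ?thesis
    using equiv_class_eq[OF kep_rel_equiv] by blast
qed

lemma periodic_int:
  fixes f :: "int \<Rightarrow> 'a"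
  assumes "\<And>z. f (z + d) = f z"
  shows "f (z + q * d) = f z"
proof (induction q rule: int_induct[where k = 0])
  case base
  then show ?case by simp
next
  case (step1 i)
  have "f (z + (i + 1) * d) = f ((z + i * d) + d)" by (simp add: algebra_simps)
  then show ?case using assms step1 by simp
next
  case (step2 i)
  have "f (z + i * d) = f ((z + (i - 1) * d) + d)" by (simp add: algebra_simps)
  then show ?case using assms step2 by simp
qed

lemma finite_G_B_iso_iff:
  assumes l: "l \<in> {1..N}"
  shows "finite (G_B_iso N A B l) \<longleftrightarrow> (\<exists>x y. x \<noteq> y \<and> ((x, l), (y, l)) \<in> kep_rel N A B)"
proof
  let ?cls = "\<lambda>z. kep_rel N A B `` {(z, l)}"
  assume "finite (G_B_iso N A B l)"
  then have "\<not> inj ?cls"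
    using finite_imageD[of ?cls UNIV] infinite_UNIV_int by (auto simp: G_B_iso_eq)
  then obtain x y where "x \<noteq> y" "?cls x = ?cls y"
    unfolding inj_def by blast
  then show "\<exists>x y. x \<noteq> y \<and> ((x, l), (y, l)) \<in> kep_rel N A B"
    using eq_equiv_class[OF _ kep_rel_equiv] l by blast
next
  let ?cls = "\<lambda>z. kep_rel N A B `` {(z, l)}"
  assume "\<exists>x y. x \<noteq> y \<and> ((x, l), (y, l)) \<in> kep_rel N A B"
  then obtain x y where xy: "x \<noteq> y" "((x, l), (y, l)) \<in> kep_rel N A B"
    by blast
  define d where "d = y - x"
  have "d \<noteq> 0" using xy(1) by (simp add: d_def)
  have "?cls z = ?cls (z mod d)" for z
    using periodic_int[of ?cls d "z mod d" "z div d"] kep_rel_class_shift[OF xy(2)]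
    by (simp add: d_def mod_div_mult_eq)
  moreover have "z mod d \<in> {-\<bar>d\<bar>..\<bar>d\<bar>}" for z
    using abs_mod_less[OF \<open>d \<noteq> 0\<close>, of z] by (auto simp: abs_less_iff)
  ultimately have "G_B_iso N A B l \<subseteq> ?cls ` {-\<bar>d\<bar>..\<bar>d\<bar>}"
    unfolding G_B_iso_eq by blast
  then show "finite (G_B_iso N A B l)"
    using finite_subset by blast
qed

lemma inf_vertices_kep_rel_eq:
  "l \<in> inf_vertices N A B \<Longrightarrow> ((x, l), (y, l)) \<in> kep_rel N A B \<Longrightarrow> x = y"
  using finite_G_B_iso_iff unfolding inf_vertices_def by blast

lemma kep_rel_class_inf_vertex:
  assumes "g \<in> UNIV \<times> inf_vertices N A B"
  shows "kep_rel N A B `` {g} = {g}"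
proof -
  obtain x l where g: "g = (x, l)" "l \<in> inf_vertices N A B"
    using assms by auto
  have "((x, l), h) \<in> kep_rel N A B \<Longrightarrow> h = (x, l)" for h
    using inf_vertices_kep_rel_eq[OF g(2)] by (cases h) (auto simp: kep_rel_def)
  moreover have "l \<in> {1..N}"
    using g(2) inf_vertices_subset by blast
  then have "((x, l), (x, l)) \<in> kep_rel N A B"
    by (simp add: kep_rel_def)
  ultimately show ?thesis using g(1) by blast
qed

lemma kep_rel_edge:
  assumes rel: "((x, j), (y, j)) \<in> kep_rel N A B" and e: "e \<in> kep_edges N A" "rng e = j"
  shows "kep_edge_act A B x e = kep_edge_act A B y e"
    and "((kep_edge_res A B x e, src e), (kep_edge_res A B y e, src e)) \<in> kep_rel N A B"
proof -
  have j: "j \<in> {1..N}" and s: "src e \<in> {1..N}"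
    and same_at_j: "\<And>n \<mu>. \<mu> \<in> paths {1..N} (kep_edges N A) j n \<Longrightarrow> kep_act A B x \<mu> = kep_act A B y \<mu>"
    using rel e(1) src_kep_edges by (auto simp: kep_rel_def)
  have same: "kep_act A B x (e # \<nu>) = kep_act A B y (e # \<nu>)"
    if "\<nu> \<in> paths {1..N} (kep_edges N A) (src e) n" for \<nu> n
  proof -
    have "e # \<nu> \<in> paths {1..N} (kep_edges N A) j (Suc n)"
      using paths_Cons[OF src_kep_edges] that e j by auto
    then show ?thesis by (rule same_at_j)
  qed
  have "[] \<in> paths {1..N} (kep_edges N A) (src e) 0"
    using s by (simp add: paths_Nil)
  from same[OF this] show "kep_edge_act A B x e = kep_edge_act A B y e"
    by simp
  show "((kep_edge_res A B x e, src e), (kep_edge_res A B y e, src e)) \<in> kep_rel N A B"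
    using same s by (auto simp: kep_rel_def)
qed

lemma kep_edge_act_res_cancel:
  assumes "m < A i j"
    and "kep_edge_act A B x (i, j, m) = kep_edge_act A B y (i, j, m)"
    and "kep_edge_res A B x (i, j, m) = kep_edge_res A B y (i, j, m)"
  shows "x * B i j = y * B i j"
proof -
  define a where "a = int (A i j)"
  have a_pos: "a > 0" using assms(1) by (simp add: a_def)
  have "(x * B i j + int m) mod a = (y * B i j + int m) mod a"
    using assms(2) a_pos unfolding kep_edge_act_def a_def by (simp add: eq_nat_nat_iff)
  moreover have "(x * B i j + int m) div a = (y * B i j + int m) div a"
    using assms(3) unfolding kep_edge_res_def a_def by simp
  ultimately have "x * B i j + int m = y * B i j + int m"
    by (metis div_mult_mod_eq)
  then show ?thesis by simp
qed

lemma B_eq_0_if_rng_finite_src_inf: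
  assumes e: "(j, l, m) \<in> kep_edges N A"
    and j_fin: "j \<notin> inf_vertices N A B" and l_inf: "l \<in> inf_vertices N A B"
  shows "B j l = 0"
proof -
  have j: "j \<in> {1..N}" and m: "m < A j l"
    using e by (auto simp: kep_edges_def)
  obtain x y where xy: "x \<noteq> y" "((x, j), (y, j)) \<in> kep_rel N A B"
    using finite_G_B_iso_iff[OF j] j_fin j by (auto simp: inf_vertices_def)
  have rng: "rng (j, l, m) = j" by (simp add: rng_def)
  note compat = kep_rel_edge[OF xy(2) e rng]
  have "kep_edge_res A B x (j, l, m) = kep_edge_res A B y (j, l, m)"
    using inf_vertices_kep_rel_eq[OF l_inf] compat(2) by (simp add: src_def)
  with kep_edge_act_res_cancel[OF m compat(1)] have "x * B j l = y * B j l" .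
  then show ?thesis using xy(1) by simp
qed

definition tame :: "nat \<Rightarrow> (nat \<Rightarrow> nat \<Rightarrow> nat) \<Rightarrow> (nat \<Rightarrow> nat \<Rightarrow> int) \<Rightarrow> int \<times> nat \<Rightarrow> bool" where
  "tame N A B h \<longleftrightarrow> snd h \<in> {1..N} \<and> (snd h \<notin> inf_vertices N A B \<or> fst h = 0)"

lemma finite_tame_classes: "finite ((\<lambda>h. kep_rel N A B `` {h}) ` Collect (tame N A B))"
proof (rule finite_subset)
  show "(\<lambda>h. kep_rel N A B `` {h}) ` Collect (tame N A B) \<subseteq>
      (\<Union>j\<in>{1..N} - inf_vertices N A B. G_B_iso N A B j) \<union> (\<lambda>l. kep_rel N A B `` {(0, l)}) ` {1..N}"
    by (auto simp: tame_def G_B_iso_eq)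
  show "finite ((\<Union>j\<in>{1..N} - inf_vertices N A B. G_B_iso N A B j) \<union> (\<lambda>l. kep_rel N A B `` {(0, l)}) ` {1..N})"
    by (auto simp: inf_vertices_def)
qed

lemma tame_kep_restr_edge:
  assumes h: "tame N A B h" and e: "e \<in> kep_edges N A" "rng e = snd h"
  shows "tame N A B (kep_edge_res A B (fst h) e, src e)"
proof -
  have "kep_edge_res A B (fst h) e = 0" if src_inf: "src e \<in> inf_vertices N A B"
  proof (cases "fst h = 0")
    case False
    then have "rng e \<notin> inf_vertices N A B"
      using h e(2) by (simp add: tame_def)
    then have "B (rng e) (src e) = 0"
      using B_eq_0_if_rng_finite_src_inf e(1) src_inf by (cases e) (auto simp: rng_def src_def)
    then show ?thesis using kep_edge_res_eq_0 e(1) by blast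
  qed (use kep_edge_res_eq_0 e(1) in blast)
  then show ?thesis using e(1) src_kep_edges by (auto simp: tame_def)
qed

lemma tame_kep_restr:
  "tame N A B h \<Longrightarrow> \<mu> \<in> paths {1..N} (kep_edges N A) (snd h) k \<Longrightarrow> tame N A B (kep_restr A B h \<mu>)"
proof (induction \<mu> arbitrary: h k)
  case Nil
  then show ?case by (simp add: kep_restr_def)
next
  case (Cons e \<nu>)
  then obtain k' where "e \<in> kep_edges N A" "rng e = snd h" "\<nu> \<in> paths {1..N} (kep_edges N A) (src e) k'"
    using paths_Cons[OF src_kep_edges] by blast
  then show ?case
    using Cons.IH tame_kep_restr_edge[OF Cons.prems(1)] by (simp add: kep_restr_Cons)
qed

text \<open>The first edge of \<open>\<mu>\<close> outside \<open>E\<^sub>A\<^sub>,\<^sub>\<infinity>\<close> has \<open>B\<^sub>e = 0\<close> or a finite source, so the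
  restriction along it is tame.\<close>

lemma inf_path_or_tame_kep_restr:
  "snd h \<in> inf_vertices N A B \<Longrightarrow> \<mu> \<in> paths {1..N} (kep_edges N A) (snd h) k \<Longrightarrow>
   \<mu> \<in> paths (inf_vertices N A B) (inf_edges N A B) (snd h) k \<or> tame N A B (kep_restr A B h \<mu>)"
proof (induction \<mu> arbitrary: h k)
  case Nil
  then show ?case by (simp add: paths_Nil)
next
  case (Cons e \<nu>)
  then obtain k' where k': "k = Suc k'" "e \<in> kep_edges N A" "rng e = snd h"
      "\<nu> \<in> paths {1..N} (kep_edges N A) (src e) k'"
    using paths_Cons[OF src_kep_edges] by blast
  define h' where "h' = (kep_edge_res A B (fst h) e, src e)"
  have restr: "kep_restr A B h (e # \<nu>) = kep_restr A B h' \<nu>"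
    by (simp add: kep_restr_Cons h'_def)
  show ?case
  proof (cases "e \<in> inf_edges N A B")
    case True
    then have "src e \<in> inf_vertices N A B" using src_inf_edges by blast
    then have "\<nu> \<in> paths (inf_vertices N A B) (inf_edges N A B) (src e) k' \<or> tame N A B (kep_restr A B h' \<nu>)"
      using Cons.IH[of h' k'] k' by (simp add: h'_def)
    then show ?thesis
      using paths_Cons[OF src_inf_edges] True k' Cons.prems(1) restr by auto
  next
    case False
    then have "src e \<notin> inf_vertices N A B \<or> B (rng e) (src e) = 0"
      using k'(2) by (auto simp: inf_edges_def)
    then have "tame N A B h'"
      using kep_edge_res_eq_0[OF k'(2)] k'(2) src_kep_edges by (auto simp: tame_def h'_def)
    then have "tame N A B (kep_restr A B h' \<nu>)"
      using tame_kep_restr k'(4) by (simp add: h'_def)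
    then show ?thesis using restr by simp
  qed
qed

lemma G_B_class_inf_vertex:
  assumes "g \<in> UNIV \<times> inf_vertices N A B"
  shows "kep_rel N A B `` {g} \<in> G_B N A B"
    and "G_B_d (kep_rel N A B `` {g}) = snd g"
    and "G_B_restr N A B (kep_rel N A B `` {g}) \<mu> = kep_rel N A B `` {kep_restr A B g \<mu>}"
proof -
  show "kep_rel N A B `` {g} \<in> G_B N A B"
    unfolding G_B_def using assms inf_vertices_subset by (blast intro: quotientI)
  show "G_B_d (kep_rel N A B `` {g}) = snd g"
    "G_B_restr N A B (kep_rel N A B `` {g}) \<mu> = kep_rel N A B `` {kep_restr A B g \<mu>}"
    unfolding kep_rel_class_inf_vertex[OF assms] by (simp_all add: G_B_d_def G_B_restr_def)
qed

lemma G_B_representative: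
  assumes "c \<in> G_B N A B"
  obtains g where "g \<in> UNIV \<times> {1..N}" "G_B_d c = snd g"
    "\<And>\<mu>. G_B_restr N A B c \<mu> = kep_rel N A B `` {kep_restr A B g \<mu>}"
proof -
  obtain x where x: "x \<in> UNIV \<times> {1..N}" "c = kep_rel N A B `` {x}"
    using assms unfolding G_B_def by (rule quotientE)
  define g where "g = (SOME g. g \<in> c)"
  have "x \<in> c"
    using x equiv_class_self[OF kep_rel_equiv] by blast
  then have "g \<in> c"
    unfolding g_def by (rule someI)
  then have "g \<in> UNIV \<times> {1..N}"
    using x(2) equiv_type[OF kep_rel_equiv] by blast
  then show thesis
    using that by (simp add: g_def G_B_d_def G_B_restr_def)
qed

lemma finite_inf_vertex_preimage:
  assumes "finite F"
  shows "finite {g \<in> UNIV \<times> inf_vertices N A B. kep_rel N A B `` {g} \<in> F}"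
proof (rule finite_imageD)
  show "inj_on (\<lambda>g. kep_rel N A B `` {g}) {g \<in> UNIV \<times> inf_vertices N A B. kep_rel N A B `` {g} \<in> F}"
    unfolding inj_on_def using kep_rel_class_inf_vertex by auto
  show "finite ((\<lambda>g. kep_rel N A B `` {g}) ` {g \<in> UNIV \<times> inf_vertices N A B. kep_rel N A B `` {g} \<in> F})"
    using assms by (rule finite_subset[rotated]) auto
qed

lemma KEP_inf_contracting_if_KEP_contracting:
  assumes "KEP_contracting N A B"
  shows "KEP_inf_contracting N A B"
proof -
  let ?R = "kep_rel N A B" and ?I = "inf_vertices N A B"
  obtain F where F: "F \<subseteq> G_B N A B" "finite F"
    "\<forall>c\<in>G_B N A B. \<exists>n. \<forall>k\<ge>n. \<forall>\<mu>\<in>paths {1..N} (kep_edges N A) (G_B_d c) k. G_B_restr N A B c \<mu> \<in> F"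
    using assms unfolding KEP_contracting_def contracting_def by blast
  define F' where "F' = {g \<in> UNIV \<times> ?I. ?R `` {g} \<in> F}"
  have "finite F'"
    unfolding F'_def using finite_inf_vertex_preimage[OF F(2)] .
  moreover have "\<exists>n. \<forall>k\<ge>n. \<forall>\<mu>\<in>paths ?I (inf_edges N A B) (snd g) k. kep_restr A B g \<mu> \<in> F'"
    if g: "g \<in> UNIV \<times> ?I" for g
  proof -
    note cls = G_B_class_inf_vertex[OF g]
    obtain n where n: "\<forall>k\<ge>n. \<forall>\<mu>\<in>paths {1..N} (kep_edges N A) (snd g) k. ?R `` {kep_restr A B g \<mu>} \<in> F"
      using F(3) cls by metis
    have "kep_restr A B g \<mu> \<in> F'" if "k \<ge> n" and \<mu>: "\<mu> \<in> paths ?I (inf_edges N A B) (snd g) k" for k \<mu>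
    proof -
      have "\<mu> \<in> paths {1..N} (kep_edges N A) (snd g) k"
        using paths_mono[OF inf_vertices_subset inf_edges_subset \<mu>] .
      then have "?R `` {kep_restr A B g \<mu>} \<in> F"
        using n \<open>k \<ge> n\<close> by blast
      moreover have "snd (kep_restr A B g \<mu>) \<in> ?I"
        using snd_kep_restr_in_vertices[OF src_inf_edges \<mu>] .
      ultimately show ?thesis
        unfolding F'_def by (simp add: mem_Times_iff)
    qed
    then show ?thesis by blast
  qed
  moreover have "F' \<subseteq> UNIV \<times> ?I"
    by (auto simp: F'_def)
  ultimately show ?thesis
    unfolding KEP_inf_contracting_def contracting_def by blast
qed

lemma KEP_contracting_if_KEP_inf_contracting:
  assumes "KEP_inf_contracting N A B"
  shows "KEP_contracting N A B"
proof -
  let ?R = "kep_rel N A B" and ?I = "inf_vertices N A B"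
  obtain F0 where F0: "F0 \<subseteq> UNIV \<times> ?I" "finite F0"
    "\<forall>g\<in>UNIV \<times> ?I. \<exists>n. \<forall>k\<ge>n. \<forall>\<mu>\<in>paths ?I (inf_edges N A B) (snd g) k. kep_restr A B g \<mu> \<in> F0"
    using assms unfolding KEP_inf_contracting_def contracting_def by blast
  define F where "F = (\<lambda>h. ?R `` {h}) ` (Collect (tame N A B) \<union> F0)"
  have "finite F"
    unfolding F_def image_Un using finite_tame_classes F0(2) by blast
  moreover have "F \<subseteq> G_B N A B"
  proof -
    have "Collect (tame N A B) \<union> F0 \<subseteq> UNIV \<times> {1..N}"
      using F0(1) inf_vertices_subset[of N A B] by (auto simp: tame_def)
    then show ?thesis
      unfolding F_def G_B_def by (auto intro: quotientI)
  qed
  moreover have "\<exists>n. \<forall>k\<ge>n. \<forall>\<mu>\<in>paths {1..N} (kep_edges N A) (G_B_d c) k. G_B_restr N A B c \<mu> \<in> F"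
    if c: "c \<in> G_B N A B" for c
  proof -
    obtain g where g: "g \<in> UNIV \<times> {1..N}" "G_B_d c = snd g"
      "\<And>\<mu>. G_B_restr N A B c \<mu> = ?R `` {kep_restr A B g \<mu>}"
      using G_B_representative[OF c] by blast
    show ?thesis
    proof (cases "snd g \<in> ?I")
      case False
      then have "tame N A B g" using g(1) by (auto simp: tame_def)
      then show ?thesis
        using tame_kep_restr unfolding g(2,3) F_def by blast
    next
      case True
      then have "g \<in> UNIV \<times> ?I"
        by (simp add: mem_Times_iff)
      then obtain n where "\<forall>k\<ge>n. \<forall>\<mu>\<in>paths ?I (inf_edges N A B) (snd g) k. kep_restr A B g \<mu> \<in> F0"
        using F0(3) by blast
      then show ?thesis
        using inf_path_or_tame_kep_restr[OF True] unfolding g(2,3) F_def by blast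
    qed
  qed
  ultimately show ?thesis
    unfolding KEP_contracting_def contracting_def by blast
qed

theorem proposition3p2:
  fixes N :: nat and A :: "nat \<Rightarrow> nat \<Rightarrow> nat" and B :: "nat \<Rightarrow> nat \<Rightarrow> int"
  assumes "katsura_pair N A B"
  shows "KEP_contracting N A B \<longleftrightarrow> KEP_inf_contracting N A B"
  using KEP_inf_contracting_if_KEP_contracting KEP_contracting_if_KEP_inf_contracting by blast

end
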